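(* Let $\mathcal S$ be a system of pairwise compatible splits of a finite set $X$, and consider the arrangement $\mathcal A(\mathcal S)=\{H_\sigma\mid\sigma\in\mathcal S\}$ in $V_0(X)$. For each $\mathcal S'\subseteq\mathcal S$ one has $\bigcap_{\sigma\in\mathcal S'}H_\sigma=\langle\mathbbm 1_i-\mathbbm 1_j: i\sim_{\pi(\mathcal S')}j\rangle$, and the assignment $\pi(\mathcal S')\mapsto\bigcap_{\sigma\in\mathcal S'}H_\sigma$ is a well-defined poset isomorphism from $\operatorname{im}\pi=\{\pi(\mathcal S')\mid\mathcal S'\subseteq\mathcal S\}$ (ordered so that $\rho\le\rho'$ iff $\rho'$ refines $\rho$) onto the intersection poset $\mathscr L(\mathcal A(\mathcal S))$ (ordered by reverse inclusion). Consequently, identifying the ground set of the matroid of $\mathcal A(\mathcal S)$ with $\mathcal S$, its closure operator is $$\operatorname{cl}(\mathcal S')=\{\sigma\in\mathcal S\mid \pi(\mathcal S'\cup\{\sigma\})=\pi(\mathcal S')\}.$$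
   Context: $X$ finite, $n=|X|$, $\mathbbm 1_A:=\sum_{x\in A}\mathbbm 1_x$ in $\mathbb R^X$, $V_0(X)=\{x\in\mathbb R^X\mid\sum_ix_i=0\}$. A split $A|B$ is an unordered partition of $X$ into two nonempty blocks; $A|B$ and $C|D$ are compatible if one of $A\cap C,A\cap D,B\cap C,B\cap D$ is empty. For $\sigma=A|B$, $v_\sigma:=\tfrac{|B|}{n}\mathbbm 1_A-\tfrac{|A|}{n}\mathbbm 1_B$ and $H_\sigma:=\{x\in V_0(X)\mid\langle x,v_\sigma\rangle=0\}$. For $\mathcal S'\subseteq\mathcal S$, $\pi(\mathcal S')$ is the partition of $X$ into classes of the relation "$i,j$ lie on the same side of every split in $\mathcal S'$" (for $\mathcal S'=\emptyset$ this is the one-block partition). The intersection poset $\mathscr L(\mathcal A)$ is the set of all intersections of subsets of $\mathcal A$ (empty intersection $=V_0(X)$), ordered by reverse inclusion. The closure of $\mathcal S'$ in the matroid of the arrangement is the set of $\sigma\in\mathcal S$ with $\bigcap_{\tau\in\mathcal S'}H_\tau\subseteq H_\sigma$. *)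

theory Defs
  imports "HOL-Analysis.Analysis"
begin

text \<open>Ground set X is the universe of a finite type 'a; R^X is real^'a.\<close>

definition ind :: "'a::finite set \<Rightarrow> real^'a" where
  "ind A = (\<chi> i. if i \<in> A then 1 else 0)"

definition V0 :: "(real^'a::finite) set" where
  "V0 = {x. (\<Sum>i\<in>UNIV. x $ i) = 0}"

text \<open>A split A|B is represented as the unordered pair {A, B}.\<close>
definition is_split :: "'a::finite set set \<Rightarrow> bool" where
  "is_split s \<longleftrightarrow> (\<exists>A B. s = {A, B} \<and> A \<noteq> {} \<and> B \<noteq> {} \<and> A \<inter> B = {} \<and> A \<union> B = UNIV)"

definition compatible :: "'a::finite set set \<Rightarrow> 'a set set \<Rightarrow> bool" where
  "compatible s t \<longleftrightarrow> (\<exists>P\<in>s. \<exists>Q\<in>t. P \<inter> Q = {})"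

definition split_vec :: "'a::finite set \<Rightarrow> 'a set \<Rightarrow> real^'a" where
  "split_vec A B = (real (card B) / real CARD('a)) *\<^sub>R ind A
                   - (real (card A) / real CARD('a)) *\<^sub>R ind B"

text \<open>H_sigma, computed from a chosen side A of sigma (the hyperplane does not
  depend on the choice, since swapping sides negates the normal vector).\<close>
definition H :: "'a::finite set set \<Rightarrow> (real^'a) set" where
  "H s = (let A = (SOME A. A \<in> s) in {x \<in> V0. x \<bullet> split_vec A (UNIV - A) = 0})"

definition Hint :: "'a::finite set set set \<Rightarrow> (real^'a) set" where
  "Hint S' = V0 \<inter> (\<Inter>s\<in>S'. H s)"

definition same_side :: "'a set set set \<Rightarrow> 'a \<Rightarrow> 'a \<Rightarrow> bool" where
  "same_side S' i j \<longleftrightarrow> (\<forall>s\<in>S'. \<forall>A\<in>s. i \<in> A \<longleftrightarrow> j \<in> A)"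

definition part :: "'a set set set \<Rightarrow> 'a set set" where
  "part S' = {{j. same_side S' i j} | i. True}"

definition refines :: "'a set set \<Rightarrow> 'a set set \<Rightarrow> bool" where
  "refines \<rho>' \<rho> \<longleftrightarrow> (\<forall>B\<in>\<rho>'. \<exists>C\<in>\<rho>. B \<subseteq> C)"

definition intersection_poset :: "'a::finite set set set \<Rightarrow> (real^'a) set set" where
  "intersection_poset S = {V0 \<inter> \<Inter>\<B> | \<B>. \<B> \<subseteq> H ` S}"

definition matroid_cl :: "'a::finite set set set \<Rightarrow> 'a set set set \<Rightarrow> 'a set set set" where
  "matroid_cl S S' = {s \<in> S. Hint S' \<subseteq> H s}"

end

theory Submission
  imports Defs
begin

text \<open>For a compatible split system the vectors in the intersection of the hyperplanes are
  exactly those whose coordinate sums vanish on every block of the partition: the block of i is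
  the complement of the union of the sides not containing i, and by compatibility the maximal
  such sides are pairwise disjoint, each with coordinate sum zero. Such vectors are combinations
  of differences within blocks, so the intersection is spanned by them, and it contains
  ind {i} - ind {j} exactly when i and j share a block. Hence the intersection and the partition
  determine each other, which gives the poset isomorphism and the closure operator.\<close>

definition compatible_split_system :: "'a::finite set set set \<Rightarrow> bool" where
  "compatible_split_system S \<longleftrightarrow> (\<forall>s\<in>S. is_split s) \<and> (\<forall>s\<in>S. \<forall>t\<in>S. compatible s t)"

lemma compatible_split_system_subset:
  "compatible_split_system S \<Longrightarrow> S' \<subseteq> S \<Longrightarrow> compatible_split_system S'"
  unfolding compatible_split_system_def by blast

definition part_block :: "'a set set set \<Rightarrow> 'a \<Rightarrow> 'a set" where
  "part_block S' i = {j. same_side S' i j}"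

lemma same_side_refl: "same_side S' i i"
  by (simp add: same_side_def)

lemma same_side_sym: "same_side S' i j \<Longrightarrow> same_side S' j i"
  by (simp add: same_side_def)

lemma same_side_trans: "same_side S' i j \<Longrightarrow> same_side S' j k \<Longrightarrow> same_side S' i k"
  unfolding same_side_def by blast

lemma mem_part_block_self: "i \<in> part_block S' i"
  by (simp add: part_block_def same_side_refl)

lemma part_block_eq: "same_side S' i j \<Longrightarrow> part_block S' i = part_block S' j"
  unfolding part_block_def by (auto intro: same_side_sym same_side_trans)

lemma part_eq_range_part_block: "part S' = range (part_block S')"
  unfolding part_def part_block_def by auto

lemma common_block_iff_same_side:
  "(\<exists>B\<in>part S'. i \<in> B \<and> j \<in> B) \<longleftrightarrow> same_side S' i j"
  unfolding part_eq_range_part_block part_block_def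
  by (auto intro: same_side_refl dest: same_side_sym same_side_trans)

lemma part_eq_iff: "part S1 = part S2 \<longleftrightarrow> same_side S1 = same_side S2"
proof
  assume "part S1 = part S2"
  then have "same_side S1 i j \<longleftrightarrow> same_side S2 i j" for i j
    by (simp only: common_block_iff_same_side[symmetric])
  then show "same_side S1 = same_side S2" by blast
next
  assume "same_side S1 = same_side S2"
  then show "part S1 = part S2" unfolding part_def by (rule arg_cong)
qed

lemma refines_part_iff:
  "refines (part S2) (part S1) \<longleftrightarrow> (\<forall>i j. same_side S2 i j \<longrightarrow> same_side S1 i j)"
proof
  assume refines: "refines (part S2) (part S1)"
  show "\<forall>i j. same_side S2 i j \<longrightarrow> same_side S1 i j"
  proof (intro allI impI)
    fix i j assume "same_side S2 i j"
    have "part_block S2 i \<in> part S2"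
      by (simp add: part_eq_range_part_block)
    then obtain C where "C \<in> part S1" "part_block S2 i \<subseteq> C"
      using refines unfolding refines_def by blast
    moreover have "i \<in> part_block S2 i" "j \<in> part_block S2 i"
      using \<open>same_side S2 i j\<close> by (auto simp: part_block_def same_side_refl)
    ultimately have "\<exists>C\<in>part S1. i \<in> C \<and> j \<in> C" by blast
    then show "same_side S1 i j" by (simp only: common_block_iff_same_side)
  qed
next
  assume "\<forall>i j. same_side S2 i j \<longrightarrow> same_side S1 i j"
  then have "part_block S2 k \<subseteq> part_block S1 k" for k
    unfolding part_block_def by blast
  then show "refines (part S2) (part S1)"
    unfolding refines_def part_eq_range_part_block by blast
qed

lemma ind_nth: "ind A $ k = (if k \<in> A then 1 else 0)"
  by (simp add: ind_def)

lemma inner_ind: "x \<bullet> ind A = (\<Sum>j\<in>A. x $ j)"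
proof -
  have "x \<bullet> ind A = (\<Sum>k\<in>UNIV. if k \<in> A then x $ k else 0)"
    unfolding inner_vec_def ind_def by (auto intro!: sum.cong)
  then show ?thesis by (simp add: sum.If_cases)
qed

lemma split_eq_side_compl: "is_split s \<Longrightarrow> Q \<in> s \<Longrightarrow> s = {Q, - Q} \<and> Q \<noteq> {} \<and> Q \<noteq> UNIV"
  unfolding is_split_def by blast

lemma sum_V0_compl: "x \<in> V0 \<Longrightarrow> (\<Sum>j\<in>- A. x $ j) = - (\<Sum>j\<in>A. x $ j)"
  using sum_diff[of UNIV A "\<lambda>j. x $ j"] by (simp add: V0_def Compl_eq_Diff_UNIV)

lemma inner_split_vec:
  assumes "x \<in> V0"
  shows "x \<bullet> split_vec A (- A) = (\<Sum>j\<in>A. x $ j)"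
proof -
  let ?a = "real (card A)" and ?b = "real (card (- A))" and ?n = "real CARD('a)"
  have "card A + card (- A) = CARD('a)"
    using card_Un_disjoint[of A "- A"] by (simp add: Un_commute)
  then have card_sum: "?a + ?b = ?n" by (metis of_nat_add)
  have "x \<bullet> split_vec A (- A) = ?b / ?n * (\<Sum>j\<in>A. x $ j) - ?a / ?n * (\<Sum>j\<in>- A. x $ j)"
    unfolding split_vec_def by (simp add: inner_diff_right inner_ind)
  also have "\<dots> = (?a + ?b) / ?n * (\<Sum>j\<in>A. x $ j)"
    by (simp add: sum_V0_compl[OF assms] add_divide_distrib algebra_simps)
  finally show ?thesis using card_sum by simp
qed

lemma sum_side_eq_0:
  assumes "is_split s" "x \<in> H s" "Q \<in> s"
  shows "(\<Sum>j\<in>Q. x $ j) = 0"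
proof -
  define A where "A = (SOME A. A \<in> s)"
  have "A \<in> s" unfolding A_def using assms(3) by (rule someI)
  then have "Q = A \<or> Q = - A"
    using split_eq_side_compl[OF assms(1)] assms(3) by blast
  moreover have "x \<in> V0" "x \<bullet> split_vec A (- A) = 0"
    using assms(2) by (auto simp: H_def A_def Let_def Compl_eq_Diff_UNIV)
  ultimately show ?thesis by (auto simp: inner_split_vec sum_V0_compl)
qed

definition far_sides :: "'a set set set \<Rightarrow> 'a \<Rightarrow> 'a set set" where
  "far_sides S' i = {Q. \<exists>s\<in>S'. Q \<in> s \<and> i \<notin> Q}"

definition maximal_sets :: "'a set set \<Rightarrow> 'a set set" where
  "maximal_sets F = {Q\<in>F. \<forall>Q'\<in>F. Q \<subseteq> Q' \<longrightarrow> Q' = Q}"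

lemma Union_maximal_sets:
  assumes "finite F"
  shows "\<Union>(maximal_sets F) = \<Union>F"
proof
  show "\<Union>F \<subseteq> \<Union>(maximal_sets F)"
  proof
    fix j assume "j \<in> \<Union>F"
    then obtain Q where "Q \<in> F" "j \<in> Q" by blast
    moreover obtain M where "M \<in> F" "Q \<subseteq> M" "\<forall>Q'\<in>F. M \<subseteq> Q' \<longrightarrow> M = Q'"
      using finite_has_maximal2[OF assms \<open>Q \<in> F\<close>] by blast
    ultimately show "j \<in> \<Union>(maximal_sets F)" unfolding maximal_sets_def by blast
  qed
qed (auto simp: maximal_sets_def)

lemma part_block_eq_compl_far_sides:
  assumes "\<forall>s\<in>S'. is_split s"
  shows "part_block S' i = - \<Union>(far_sides S' i)"
proof (intro set_eqI iffI)
  fix j assume "j \<in> part_block S' i"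
  then show "j \<in> - \<Union>(far_sides S' i)"
    unfolding part_block_def same_side_def far_sides_def by blast
next
  fix j assume j: "j \<in> - \<Union>(far_sides S' i)"
  have "i \<in> A \<longleftrightarrow> j \<in> A" if "s \<in> S'" "A \<in> s" for s A
  proof -
    have "- A \<in> s" using split_eq_side_compl[of s A] assms that by blast
    then have "i \<in> A \<Longrightarrow> - A \<in> far_sides S' i" "j \<in> A \<Longrightarrow> i \<notin> A \<Longrightarrow> A \<in> far_sides S' i"
      using that unfolding far_sides_def by blast+
    then show ?thesis using j by blast
  qed
  then show "j \<in> part_block S' i" unfolding part_block_def same_side_def by blast
qed

lemma maximal_far_sides_disjoint:
  assumes system: "compatible_split_system S'"
    and Q: "Q \<in> maximal_sets (far_sides S' i)" and Q': "Q' \<in> maximal_sets (far_sides S' i)"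
    and "Q \<noteq> Q'"
  shows "Q \<inter> Q' = {}"
proof -
  have maxQ: "\<And>R. R \<in> far_sides S' i \<Longrightarrow> Q \<subseteq> R \<Longrightarrow> R = Q"
    and maxQ': "\<And>R. R \<in> far_sides S' i \<Longrightarrow> Q' \<subseteq> R \<Longrightarrow> R = Q'"
    and far: "Q \<in> far_sides S' i" "Q' \<in> far_sides S' i"
    using Q Q' unfolding maximal_sets_def by auto
  obtain s t where s: "s \<in> S'" "Q \<in> s" "i \<notin> Q" and t: "t \<in> S'" "Q' \<in> t" "i \<notin> Q'"
    using far unfolding far_sides_def by auto
  have "is_split s" "is_split t" "compatible s t"
    using system s t unfolding compatible_split_system_def by auto
  then have "s = {Q, - Q}" "t = {Q', - Q'}" and "\<exists>P\<in>s. \<exists>P'\<in>t. P \<inter> P' = {}"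
    using split_eq_side_compl s(2) t(2) unfolding compatible_def by blast+
  then obtain P P' where "P = Q \<or> P = - Q" "P' = Q' \<or> P' = - Q'" "P \<inter> P' = {}"
    by blast
  then show ?thesis
  proof (elim disjE)
    assume "P = Q" "P' = - Q'"
    then show ?thesis using maxQ far \<open>P \<inter> P' = {}\<close> \<open>Q \<noteq> Q'\<close> by blast
  next
    assume "P = - Q" "P' = Q'"
    then show ?thesis using maxQ' far \<open>P \<inter> P' = {}\<close> \<open>Q \<noteq> Q'\<close> by blast
  next
    \<comment> \<open>Both sides avoid i, so their complements cannot be disjoint.\<close>
    assume "P = - Q" "P' = - Q'"
    then show ?thesis using \<open>P \<inter> P' = {}\<close> s(3) t(3) by blast
  qed simp
qed

lemma sum_part_block_eq_0:
  assumes system: "compatible_split_system S'" and x: "x \<in> Hint S'"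
  shows "(\<Sum>j\<in>part_block S' i. x $ j) = 0"
proof -
  let ?M = "maximal_sets (far_sides S' i)"
  have splits: "\<forall>s\<in>S'. is_split s"
    using system by (simp add: compatible_split_system_def)
  have "\<forall>A\<in>?M. \<forall>B\<in>?M. A \<noteq> B \<longrightarrow> A \<inter> B = {}"
    using maximal_far_sides_disjoint[OF system] by blast
  then have "(\<Sum>j\<in>\<Union>?M. x $ j) = (\<Sum>Q\<in>?M. \<Sum>j\<in>Q. x $ j)"
    using sum.Union_disjoint[of ?M] by simp
  also have "\<dots> = 0"
  proof (rule sum.neutral, rule ballI)
    fix Q assume "Q \<in> ?M"
    then obtain s where s: "s \<in> S'" "Q \<in> s"
      unfolding maximal_sets_def far_sides_def by blast
    moreover have "x \<in> H s" using x s(1) by (simp add: Hint_def)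
    ultimately show "(\<Sum>j\<in>Q. x $ j) = 0"
      using splits sum_side_eq_0 by blast
  qed
  finally have "(\<Sum>j\<in>\<Union>(far_sides S' i). x $ j) = 0"
    by (simp add: Union_maximal_sets)
  moreover have "x \<in> V0" using x by (simp add: Hint_def)
  ultimately show ?thesis
    by (simp add: part_block_eq_compl_far_sides[OF splits] sum_V0_compl)
qed

definition block_diffs :: "'a::finite set set set \<Rightarrow> (real^'a) set" where
  "block_diffs S' = {ind {i} - ind {j} | i j. same_side S' i j}"

lemma subspace_Hint: "subspace (Hint S')"
  unfolding subspace_def Hint_def H_def Let_def V0_def
  by (auto simp: sum.distrib inner_add_left sum_distrib_left[symmetric])

lemma diff_ind_in_Hint:
  assumes splits: "\<forall>s\<in>S'. is_split s" and "same_side S' i j"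
  shows "ind {i} - ind {j} \<in> Hint S'"
proof -
  have V0: "ind {i} - ind {j} \<in> V0"
    unfolding V0_def by (simp add: sum_subtractf ind_nth)
  have "ind {i} - ind {j} \<in> H s" if s: "s \<in> S'" for s
  proof -
    define A where "A = (SOME A. A \<in> s)"
    have "A \<in> s" unfolding A_def using splits s is_split_def by (metis insertI1 someI)
    then have "i \<in> A \<longleftrightarrow> j \<in> A" using assms(2) s unfolding same_side_def by blast
    then have "split_vec A (UNIV - A) $ i = split_vec A (UNIV - A) $ j"
      unfolding split_vec_def by (simp add: ind_nth)
    then show ?thesis
      using V0 by (simp add: H_def Let_def A_def[symmetric] inner_commute[of "ind _ - ind _"]
          inner_diff_right inner_ind)
  qed
  then show ?thesis using V0 unfolding Hint_def by blast
qed

lemma in_span_block_diffs: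
  fixes x :: "real^'a::finite"
  assumes block_sums: "\<And>i. (\<Sum>j\<in>part_block S' i. x $ j) = 0"
  shows "x \<in> span (block_diffs S')"
proof -
  define r where "r i = (SOME j. j \<in> part_block S' i)" for i
  have r: "same_side S' i (r i)" for i
    using someI[of "\<lambda>j. j \<in> part_block S' i", OF mem_part_block_self]
    unfolding r_def part_block_def by simp
  have fibre: "{i. r i = r k} = part_block S' k" for k
  proof (intro set_eqI iffI)
    fix i assume "i \<in> {i. r i = r k}"
    then have "same_side S' (r k) i"
      using same_side_sym[OF r[of i]] by simp
    then have "same_side S' k i"
      using same_side_trans[OF r[of k]] by blast
    then show "i \<in> part_block S' k" by (simp add: part_block_def)
  next
    fix i assume "i \<in> part_block S' k"
    then have "part_block S' k = part_block S' i"
      by (intro part_block_eq) (simp add: part_block_def)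
    then show "i \<in> {i. r i = r k}" by (simp add: r_def)
  qed
  have fibre_sum: "(\<Sum>i | r i = k. x $ i) = 0" for k
    by (cases "\<exists>k'. r k' = k") (auto simp: fibre block_sums)
  \<comment> \<open>Each coordinate is moved to the representative of its block; the totals cancel there.\<close>
  have "x = (\<Sum>i\<in>UNIV. x $ i *\<^sub>R (ind {i} - ind {r i}))"
  proof (unfold vec_eq_iff, intro allI)
    fix k
    have "(\<Sum>i\<in>UNIV. x $ i *\<^sub>R (ind {i} - ind {r i})) $ k
        = (\<Sum>i\<in>UNIV. if i = k then x $ i else 0) - (\<Sum>i\<in>UNIV. if r i = k then x $ i else 0)"
    proof -
      have "(\<Sum>i\<in>UNIV. x $ i *\<^sub>R (ind {i} - ind {r i})) $ k
          = (\<Sum>i\<in>UNIV. x $ i * ind {i} $ k) - (\<Sum>i\<in>UNIV. x $ i * ind {r i} $ k)"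
        by (simp add: right_diff_distrib sum_subtractf)
      moreover have "(\<Sum>i\<in>UNIV. x $ i * ind {i} $ k) = (\<Sum>i\<in>UNIV. if i = k then x $ i else 0)"
        by (rule sum.cong) (auto simp: ind_nth)
      moreover have "(\<Sum>i\<in>UNIV. x $ i * ind {r i} $ k) = (\<Sum>i\<in>UNIV. if r i = k then x $ i else 0)"
        by (rule sum.cong) (auto simp: ind_nth)
      ultimately show ?thesis by simp
    qed
    also have "\<dots> = x $ k"
      using fibre_sum[of k] by (simp add: sum.inter_filter[symmetric])
    finally show "x $ k = (\<Sum>i\<in>UNIV. x $ i *\<^sub>R (ind {i} - ind {r i})) $ k" by simp
  qed
  moreover have "(\<Sum>i\<in>UNIV. x $ i *\<^sub>R (ind {i} - ind {r i})) \<in> span (block_diffs S')"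
    by (intro span_sum span_scale span_base) (auto simp: block_diffs_def intro: r)
  ultimately show ?thesis by simp
qed

lemma Hint_eq_span_block_diffs:
  assumes "compatible_split_system S'"
  shows "Hint S' = span (block_diffs S')"
proof
  show "span (block_diffs S') \<subseteq> Hint S'"
    using assms diff_ind_in_Hint
    by (intro span_minimal subspace_Hint) (auto simp: block_diffs_def compatible_split_system_def)
qed (use assms sum_part_block_eq_0 in_span_block_diffs in blast)

lemma diff_ind_in_Hint_iff:
  assumes system: "compatible_split_system S'"
  shows "ind {i} - ind {j} \<in> Hint S' \<longleftrightarrow> same_side S' i j"
proof
  assume "ind {i} - ind {j} \<in> Hint S'"
  then have "(\<Sum>k\<in>part_block S' i. (ind {i} - ind {j}) $ k) = 0"
    by (rule sum_part_block_eq_0[OF system])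
  then have "j \<in> part_block S' i"
    using mem_part_block_self[of i S'] by (simp add: ind_nth sum_subtractf split: if_splits)
  then show "same_side S' i j" by (simp add: part_block_def)
qed (use system diff_ind_in_Hint compatible_split_system_def in blast)

lemma Hint_subset_iff_refines:
  assumes "compatible_split_system S1" "compatible_split_system S2"
  shows "Hint S2 \<subseteq> Hint S1 \<longleftrightarrow> refines (part S2) (part S1)"
proof
  assume "Hint S2 \<subseteq> Hint S1"
  then show "refines (part S2) (part S1)"
    using assms by (auto simp: refines_part_iff diff_ind_in_Hint_iff[symmetric])
next
  assume "refines (part S2) (part S1)"
  then have "block_diffs S2 \<subseteq> block_diffs S1"
    unfolding refines_part_iff block_diffs_def by blast
  then show "Hint S2 \<subseteq> Hint S1"
    using assms by (simp add: Hint_eq_span_block_diffs span_mono)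
qed

lemma Hint_eq_iff_part_eq:
  assumes "compatible_split_system S1" "compatible_split_system S2"
  shows "Hint S1 = Hint S2 \<longleftrightarrow> part S1 = part S2"
proof -
  have "Hint S1 = Hint S2 \<longleftrightarrow> Hint S1 \<subseteq> Hint S2 \<and> Hint S2 \<subseteq> Hint S1" by blast
  also have "\<dots> \<longleftrightarrow> (\<forall>i j. same_side S1 i j \<longleftrightarrow> same_side S2 i j)"
    using assms by (auto simp: Hint_subset_iff_refines refines_part_iff)
  also have "\<dots> \<longleftrightarrow> part S1 = part S2" by (auto simp: part_eq_iff fun_eq_iff)
  finally show ?thesis .
qed

lemma intersection_poset_eq: "intersection_poset S = Hint ` Pow S"
proof (intro set_eqI iffI)
  fix y assume "y \<in> intersection_poset S"
  then obtain \<B> where "\<B> \<subseteq> H ` S" "y = V0 \<inter> \<Inter>\<B>"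
    unfolding intersection_poset_def by blast
  moreover have "H ` {s\<in>S. H s \<in> \<B>} = \<B>" using \<open>\<B> \<subseteq> H ` S\<close> by blast
  ultimately have "y = Hint {s\<in>S. H s \<in> \<B>}" unfolding Hint_def by simp
  then show "y \<in> Hint ` Pow S" by blast
qed (auto simp: intersection_poset_def Hint_def)

lemma matroid_cl_eq:
  assumes "compatible_split_system S" "S' \<subseteq> S"
  shows "matroid_cl S S' = {s \<in> S. part (S' \<union> {s}) = part S'}"
proof -
  have "Hint S' \<subseteq> H s \<longleftrightarrow> part (S' \<union> {s}) = part S'" if "s \<in> S" for s
  proof -
    have "Hint (S' \<union> {s}) = Hint S' \<inter> H s" unfolding Hint_def by auto
    then have "Hint S' \<subseteq> H s \<longleftrightarrow> Hint (S' \<union> {s}) = Hint S'" by blast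
    also have "\<dots> \<longleftrightarrow> part (S' \<union> {s}) = part S'"
      using assms that compatible_split_system_subset
      by (intro Hint_eq_iff_part_eq) auto
    finally show ?thesis .
  qed
  then show ?thesis unfolding matroid_cl_def by blast
qed

theorem mainTheorem7:
  fixes S :: "'a::finite set set set"
  assumes splits: "\<forall>s\<in>S. is_split s"
    and compat: "\<forall>s\<in>S. \<forall>t\<in>S. compatible s t"
  shows "(\<forall>S'\<subseteq>S. Hint S' =
            span {ind {i} - ind {j} | i j. \<exists>B\<in>part S'. i \<in> B \<and> j \<in> B})
    \<and> (\<exists>f. bij_betw f (part ` Pow S) (intersection_poset S)
           \<and> (\<forall>S'\<subseteq>S. f (part S') = Hint S')
           \<and> (\<forall>\<rho>\<in>part ` Pow S. \<forall>\<rho>'\<in>part ` Pow S.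
                refines \<rho>' \<rho> \<longleftrightarrow> f \<rho>' \<subseteq> f \<rho>))
    \<and> (\<forall>S'\<subseteq>S. matroid_cl S S' = {s \<in> S. part (S' \<union> {s}) = part S'})"
proof -
  have system: "compatible_split_system S'" if "S' \<subseteq> S" for S'
    using splits compat that by (auto simp: compatible_split_system_def)
  define f :: "'a set set \<Rightarrow> (real^'a) set"
    where "f \<rho> = span {ind {i} - ind {j} | i j. \<exists>B\<in>\<rho>. i \<in> B \<and> j \<in> B}" for \<rho>
  have f_part: "f (part S') = Hint S'" if "S' \<subseteq> S" for S'
    using system[OF that] by (simp add: f_def common_block_iff_same_side
        Hint_eq_span_block_diffs block_diffs_def)
  have "inj_on f (part ` Pow S)"
    by (rule inj_onI) (auto simp: f_part system Hint_eq_iff_part_eq)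
  moreover have "f ` part ` Pow S = intersection_poset S"
    by (force simp: intersection_poset_eq f_part image_image)
  ultimately have "bij_betw f (part ` Pow S) (intersection_poset S)"
    by (simp add: bij_betw_def)
  moreover have "refines \<rho>' \<rho> \<longleftrightarrow> f \<rho>' \<subseteq> f \<rho>"
    if \<rho>: "\<rho> \<in> part ` Pow S" and \<rho>': "\<rho>' \<in> part ` Pow S" for \<rho> \<rho>'
  proof -
    obtain S1 S2 where S1: "S1 \<subseteq> S" "\<rho> = part S1" and S2: "S2 \<subseteq> S" "\<rho>' = part S2"
      using \<rho> \<rho>' by blast
    then have "f \<rho>' \<subseteq> f \<rho> \<longleftrightarrow> Hint S2 \<subseteq> Hint S1" by (simp add: f_part)
    then show ?thesis
      using Hint_subset_iff_refines[OF system[OF S1(1)] system[OF S2(1)]] S1 S2 by simp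
  qed
  moreover have "\<forall>S'\<subseteq>S. Hint S' =
      span {ind {i} - ind {j} | i j. \<exists>B\<in>part S'. i \<in> B \<and> j \<in> B}"
    using f_part unfolding f_def by simp
  ultimately show ?thesis
    using f_part matroid_cl_eq[OF system[OF order_refl]] by blast
qed

end
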